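(* Let $R$ be a ring and $n\ge 2$. Then $R$ is almost Armendariz if and only if $R[x]/\langle x^n\rangle$ is almost Armendariz.
   Context: All rings are associative with identity. For a ring $R$, $P(R)$ denotes the prime radical of $R$ (the intersection of all prime ideals of $R$, equivalently the set of strongly nilpotent elements of $R$). A ring $R$ is called almost Armendariz if whenever $f(x)=\sum_{i=0}^m a_ix^i$ and $g(x)=\sum_{j=0}^n b_jx^j\in R[x]$ satisfy $f(x)g(x)=0$, then $a_ib_j\in P(R)$ for all $0\le i\le m$, $0\le j\le n$. $\langle x^n\rangle$ is the ideal of $R[x]$ generated by $x^n$. *)

theory Defs
  imports "HOL-Algebra.Algebra"
begin

definition nc_prime_ideal :: "('a, 'b) ring_scheme \<Rightarrow> 'a set \<Rightarrow> bool" where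
  "nc_prime_ideal R P \<longleftrightarrow> ideal P R \<and> P \<noteq> carrier R \<and>
     (\<forall>A B. ideal A R \<longrightarrow> ideal B R \<longrightarrow>
        (\<forall>a\<in>A. \<forall>b\<in>B. a \<otimes>\<^bsub>R\<^esub> b \<in> P) \<longrightarrow> A \<subseteq> P \<or> B \<subseteq> P)"

text \<open>Prime radical: intersection of all prime ideals (the whole ring if there are none).\<close>
definition prime_radical :: "('a, 'b) ring_scheme \<Rightarrow> 'a set" where
  "prime_radical R = {a \<in> carrier R. \<forall>P. nc_prime_ideal R P \<longrightarrow> a \<in> P}"

definition almost_armendariz :: "('a, 'b) ring_scheme \<Rightarrow> bool" where
  "almost_armendariz R \<longleftrightarrow>
     (\<forall>f \<in> carrier (UP R). \<forall>g \<in> carrier (UP R).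
        f \<otimes>\<^bsub>UP R\<^esub> g = \<zero>\<^bsub>UP R\<^esub> \<longrightarrow>
        (\<forall>i \<le> deg R f. \<forall>j \<le> deg R g.
           coeff (UP R) f i \<otimes>\<^bsub>R\<^esub> coeff (UP R) g j \<in> prime_radical R))"

definition trunc_poly_ring :: "('a, 'b) ring_scheme \<Rightarrow> nat \<Rightarrow> (nat \<Rightarrow> 'a) set ring" where
  "trunc_poly_ring R n = (UP R) Quot (genideal (UP R) {monom (UP R) \<one>\<^bsub>R\<^esub> n})"

end

theory Submission
  imports Defs
begin

text \<open>Let \<open>S = R[x]/\<langle>x\<^sup>n\<rangle>\<close>. Taking the constant coefficient is a surjective ring
  homomorphism \<open>S \<rightarrow> R\<close>, split by the embedding of constants. Its kernel \<open>xS\<close> is a nilpotent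
  ideal (\<open>(xS)\<^sup>n = 0\<close>), so it lies in every prime ideal of \<open>S\<close>; hence primes of \<open>S\<close> and \<open>R\<close>
  correspond, and an element of \<open>S\<close> lies in \<open>P(S)\<close> iff its constant coefficient lies in \<open>P(R)\<close>.
  Applying the retraction, resp. the embedding, coefficientwise transports a pair of polynomials
  with zero product from one coefficient ring to the other, and the condition on the products of
  coefficients transfers back along the same correspondence.\<close>

lemma coeff_UP_eq: "F \<in> carrier (UP A) \<Longrightarrow> coeff (UP A) F k = F k"
  by (simp add: UP_def)

lemma UP_coeff_closed: "F \<in> carrier (UP A) \<Longrightarrow> F k \<in> carrier A"
  by (simp add: UP_def mem_upD)

lemma zero_in_prime_radical:
  assumes "ring A"
  shows "\<zero>\<^bsub>A\<^esub> \<in> prime_radical A"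
proof -
  interpret ring A by fact
  show ?thesis
    unfolding prime_radical_def nc_prime_ideal_def
    using additive_subgroup.zero_closed ideal.axioms(1) by auto
qed

lemma almost_armendariz_iff_coeffs:
  assumes "ring A"
  shows "almost_armendariz A \<longleftrightarrow>
    (\<forall>f \<in> carrier (UP A). \<forall>g \<in> carrier (UP A). f \<otimes>\<^bsub>UP A\<^esub> g = \<zero>\<^bsub>UP A\<^esub> \<longrightarrow>
       (\<forall>i j. f i \<otimes>\<^bsub>A\<^esub> g j \<in> prime_radical A))"
proof -
  interpret UP_ring A "UP A" by (rule UP_ring.intro) fact
  have "f i \<otimes>\<^bsub>A\<^esub> g j \<in> prime_radical A"
    if f: "f \<in> carrier (UP A)" and g: "g \<in> carrier (UP A)"
      and beyond: "\<not> (i \<le> deg A f \<and> j \<le> deg A g)" for f g i j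
  proof -
    have "deg A f < i \<or> deg A g < j" using beyond by linarith
    then have "f i = \<zero>\<^bsub>A\<^esub> \<or> g j = \<zero>\<^bsub>A\<^esub>"
      using deg_aboveD[OF _ f, of i] deg_aboveD[OF _ g, of j]
      unfolding coeff_UP_eq[OF f] coeff_UP_eq[OF g] by blast
    then show ?thesis
      using zero_in_prime_radical[OF assms] UP_coeff_closed[OF f] UP_coeff_closed[OF g] by auto
  qed
  then show ?thesis
    unfolding almost_armendariz_def by (metis coeff_UP_eq)
qed

lemma ring_hom_poly_closed:
  assumes "ring_hom_ring A B \<phi>" and F: "F \<in> carrier (UP A)"
  shows "\<phi> \<circ> F \<in> carrier (UP B)"
proof -
  interpret ring_hom_ring A B \<phi> by fact
  obtain N where "bound \<zero>\<^bsub>A\<^esub> N F"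
    using F by (auto simp: UP_def up_def)
  then have "bound \<zero>\<^bsub>B\<^esub> N (\<phi> \<circ> F)"
    by (auto simp: bound_def)
  moreover have "(\<phi> \<circ> F) k \<in> carrier B" for k
    using UP_coeff_closed[OF F] by simp
  ultimately have "\<phi> \<circ> F \<in> up B" by blast
  then show ?thesis by (simp add: UP_def)
qed

lemma ring_hom_poly_mult:
  assumes hom: "ring_hom_ring A B \<phi>" and F: "F \<in> carrier (UP A)" and G: "G \<in> carrier (UP A)"
  shows "\<phi> \<circ> (F \<otimes>\<^bsub>UP A\<^esub> G) = (\<phi> \<circ> F) \<otimes>\<^bsub>UP B\<^esub> (\<phi> \<circ> G)"
proof
  interpret ring_hom_ring A B \<phi> by fact
  fix k
  have "(\<phi> \<circ> (F \<otimes>\<^bsub>UP A\<^esub> G)) k = \<phi> (\<Oplus>\<^bsub>A\<^esub>i \<in> {..k}. F i \<otimes>\<^bsub>A\<^esub> G (k - i))"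
    using F G by (simp add: UP_def)
  also have "\<dots> = (\<Oplus>\<^bsub>B\<^esub>i \<in> {..k}. \<phi> (F i) \<otimes>\<^bsub>B\<^esub> \<phi> (G (k - i)))"
    using hom_finsum[of "\<lambda>i. F i \<otimes>\<^bsub>A\<^esub> G (k - i)" "{..k}"] UP_coeff_closed[OF F] UP_coeff_closed[OF G]
    by (simp add: comp_def)
  also have "\<dots> = ((\<phi> \<circ> F) \<otimes>\<^bsub>UP B\<^esub> (\<phi> \<circ> G)) k"
    using ring_hom_poly_closed[OF hom F] ring_hom_poly_closed[OF hom G] by (simp add: UP_def)
  finally show "(\<phi> \<circ> (F \<otimes>\<^bsub>UP A\<^esub> G)) k = ((\<phi> \<circ> F) \<otimes>\<^bsub>UP B\<^esub> (\<phi> \<circ> G)) k" .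
qed

lemma ring_hom_poly_mult_eq_zero:
  assumes hom: "ring_hom_ring A B \<phi>" and F: "F \<in> carrier (UP A)" and G: "G \<in> carrier (UP A)"
    and FG: "F \<otimes>\<^bsub>UP A\<^esub> G = \<zero>\<^bsub>UP A\<^esub>"
  shows "(\<phi> \<circ> F) \<otimes>\<^bsub>UP B\<^esub> (\<phi> \<circ> G) = \<zero>\<^bsub>UP B\<^esub>"
proof -
  interpret ring_hom_ring A B \<phi> by fact
  show ?thesis
    using ring_hom_poly_mult[OF hom F G] FG by (simp add: UP_def comp_def)
qed

lemma (in ring_hom_ring) ideal_image:
  assumes surj: "h ` carrier R = carrier S" and I: "ideal I R"
  shows "ideal (h ` I) S"
proof (rule idealI)
  interpret I: ideal I R by fact
  show "ring S" ..
  show "subgroup (h ` I) (add_monoid S)"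
    by (rule img_is_add_subgroup[OF I.a_subgroup])
  fix a x assume a: "a \<in> h ` I" and x: "x \<in> carrier S"
  obtain s where s: "s \<in> I" "a = h s" using a by blast
  obtain t where t: "t \<in> carrier R" "x = h t" using x surj by blast
  have "x \<otimes>\<^bsub>S\<^esub> a = h (t \<otimes> s)" and "a \<otimes>\<^bsub>S\<^esub> x = h (s \<otimes> t)"
    using s t I.Icarr by simp_all
  moreover have "t \<otimes> s \<in> I" and "s \<otimes> t \<in> I"
    using s t by (simp_all add: I.I_l_closed I.I_r_closed)
  ultimately show "x \<otimes>\<^bsub>S\<^esub> a \<in> h ` I" and "a \<otimes>\<^bsub>S\<^esub> x \<in> h ` I" by blast+
qed

lemma (in ring_hom_ring) nc_prime_ideal_vimage:
  assumes surj: "h ` carrier R = carrier S" and P: "nc_prime_ideal S P"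
  shows "nc_prime_ideal R {a \<in> carrier R. h a \<in> P}"
  unfolding nc_prime_ideal_def
proof (intro conjI allI impI)
  have P_ideal: "ideal P S" and "P \<noteq> carrier S"
    using P by (auto simp: nc_prime_ideal_def)
  show "ideal {a \<in> carrier R. h a \<in> P} R" by (rule ideal_vimage[OF P_ideal])
  show "{a \<in> carrier R. h a \<in> P} \<noteq> carrier R"
  proof
    assume "{a \<in> carrier R. h a \<in> P} = carrier R"
    then have "h \<one> \<in> P" using R.one_closed by blast
    then show False using \<open>P \<noteq> carrier S\<close> ideal.one_imp_carrier[OF P_ideal] by simp
  qed
  fix I J assume I: "ideal I R" and J: "ideal J R"
    and prod: "\<forall>a\<in>I. \<forall>b\<in>J. a \<otimes> b \<in> {a \<in> carrier R. h a \<in> P}"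
  have "\<forall>x\<in>h ` I. \<forall>y\<in>h ` J. x \<otimes>\<^bsub>S\<^esub> y \<in> P"
    using prod ideal.Icarr[OF I] ideal.Icarr[OF J] by fastforce
  then have "h ` I \<subseteq> P \<or> h ` J \<subseteq> P"
    using P ideal_image[OF surj I] ideal_image[OF surj J] by (auto simp: nc_prime_ideal_def)
  then show "I \<subseteq> {a \<in> carrier R. h a \<in> P} \<or> J \<subseteq> {a \<in> carrier R. h a \<in> P}"
    using ideal.Icarr[OF I] ideal.Icarr[OF J] by blast
qed

lemma (in ring_hom_ring) ideal_image_saturated:
  assumes Q: "ideal Q R" and ker: "\<And>x. x \<in> carrier R \<Longrightarrow> h x = \<zero>\<^bsub>S\<^esub> \<Longrightarrow> x \<in> Q"
    and a: "a \<in> carrier R" and ha: "h a \<in> h ` Q"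
  shows "a \<in> Q"
proof -
  interpret Q: ideal Q R by fact
  obtain q where q: "q \<in> Q" "h a = h q" using ha by blast
  have qc: "q \<in> carrier R" using q(1) by (rule Q.Icarr)
  have "h (a \<ominus> q) = \<zero>\<^bsub>S\<^esub>" using a qc q(2) by (simp add: a_minus_def S.r_neg)
  then have "(a \<ominus> q) \<oplus> q \<in> Q" using ker a qc q(1) by (simp add: Q.a_closed)
  moreover have "(a \<ominus> q) \<oplus> q = a" using a qc by (simp add: a_minus_def R.a_assoc R.l_neg)
  ultimately show ?thesis by simp
qed

lemma (in ring_hom_ring) nc_prime_ideal_image:
  assumes surj: "h ` carrier R = carrier S" and Q: "nc_prime_ideal R Q"
    and ker: "\<And>a. a \<in> carrier R \<Longrightarrow> h a = \<zero>\<^bsub>S\<^esub> \<Longrightarrow> a \<in> Q"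
  shows "nc_prime_ideal S (h ` Q)"
  unfolding nc_prime_ideal_def
proof (intro conjI allI impI)
  have Q_ideal: "ideal Q R" and "Q \<noteq> carrier R"
    using Q by (auto simp: nc_prime_ideal_def)
  have saturated: "a \<in> Q" if "a \<in> carrier R" "h a \<in> h ` Q" for a
    using Q_ideal ker that by (rule ideal_image_saturated)
  show "ideal (h ` Q) S" by (rule ideal_image[OF surj Q_ideal])
  show "h ` Q \<noteq> carrier S"
  proof
    assume "h ` Q = carrier S"
    then have "\<one> \<in> Q" using saturated[of \<one>] by simp
    then show False using \<open>Q \<noteq> carrier R\<close> ideal.one_imp_carrier[OF Q_ideal] by blast
  qed
  have lift: "I \<subseteq> h ` {a \<in> carrier R. h a \<in> I}" if I: "ideal I S" for I
  proof
    fix x assume x: "x \<in> I"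
    then have "x \<in> h ` carrier R" using surj ideal.Icarr[OF I] by simp
    then show "x \<in> h ` {a \<in> carrier R. h a \<in> I}" using x by auto
  qed
  fix I J assume I: "ideal I S" and J: "ideal J S"
    and prod: "\<forall>a\<in>I. \<forall>b\<in>J. a \<otimes>\<^bsub>S\<^esub> b \<in> h ` Q"
  have "a \<otimes> b \<in> Q" if "a \<in> {a \<in> carrier R. h a \<in> I}" and "b \<in> {a \<in> carrier R. h a \<in> J}" for a b
  proof (rule saturated)
    show "a \<otimes> b \<in> carrier R" using that by simp
    show "h (a \<otimes> b) \<in> h ` Q" using that prod by simp
  qed
  then have "{a \<in> carrier R. h a \<in> I} \<subseteq> Q \<or> {a \<in> carrier R. h a \<in> J} \<subseteq> Q"
    using Q ideal_vimage[OF I] ideal_vimage[OF J] unfolding nc_prime_ideal_def by blast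
  then show "I \<subseteq> h ` Q \<or> J \<subseteq> h ` Q"
    using lift[OF I] lift[OF J] by blast
qed

lemma (in ring_hom_ring) prime_radical_iff_image:
  assumes surj: "h ` carrier R = carrier S"
    and ker: "\<And>Q a. nc_prime_ideal R Q \<Longrightarrow> a \<in> carrier R \<Longrightarrow> h a = \<zero>\<^bsub>S\<^esub> \<Longrightarrow> a \<in> Q"
    and x: "x \<in> carrier R"
  shows "x \<in> prime_radical R \<longleftrightarrow> h x \<in> prime_radical S"
proof
  assume "x \<in> prime_radical R"
  then show "h x \<in> prime_radical S"
    using nc_prime_ideal_vimage[OF surj] x by (auto simp: prime_radical_def)
next
  assume hx: "h x \<in> prime_radical S"
  have "x \<in> Q" if Q: "nc_prime_ideal R Q" for Q
  proof (rule ideal_image_saturated[OF _ ker[OF Q] x])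
    show "ideal Q R" using Q by (simp add: nc_prime_ideal_def)
    show "h x \<in> h ` Q"
      using hx nc_prime_ideal_image[OF surj Q ker[OF Q]] by (simp add: prime_radical_def)
  qed
  then show "x \<in> prime_radical R" using x by (simp add: prime_radical_def)
qed

lemma filtration_subset_nc_prime_ideal:
  assumes Q: "nc_prime_ideal A Q" and K_ideal: "\<And>m. ideal (K m) A"
    and K_mult: "\<And>m x y. x \<in> K m \<Longrightarrow> y \<in> K 1 \<Longrightarrow> x \<otimes>\<^bsub>A\<^esub> y \<in> K (Suc m)"
    and "K (Suc m) \<subseteq> Q"
  shows "K 1 \<subseteq> Q"
  using \<open>K (Suc m) \<subseteq> Q\<close>
proof (induction m)
  case 0
  then show ?case by simp
next
  case (Suc m)
  then have "\<forall>x\<in>K (Suc m). \<forall>y\<in>K 1. x \<otimes>\<^bsub>A\<^esub> y \<in> Q" using K_mult by blast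
  then have "K (Suc m) \<subseteq> Q \<or> K 1 \<subseteq> Q"
    using Q K_ideal unfolding nc_prime_ideal_def by blast
  then show ?case using Suc.IH by blast
qed

lemma almost_armendariz_retract:
  assumes h: "ring_hom_ring A B h" and s: "ring_hom_ring B A s"
    and retraction: "\<And>b. b \<in> carrier B \<Longrightarrow> h (s b) = b"
    and ker: "\<And>Q a. nc_prime_ideal A Q \<Longrightarrow> a \<in> carrier A \<Longrightarrow> h a = \<zero>\<^bsub>B\<^esub> \<Longrightarrow> a \<in> Q"
  shows "almost_armendariz A \<longleftrightarrow> almost_armendariz B"
proof -
  interpret h: ring_hom_ring A B h by fact
  interpret s: ring_hom_ring B A s by fact
  have "h ` carrier A = carrier B"
  proof (intro equalityI subsetI)
    fix b assume "b \<in> carrier B"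
    then have "b = h (s b)" and "s b \<in> carrier A" using retraction by simp_all
    then show "b \<in> h ` carrier A" by (rule image_eqI)
  qed auto
  note radical = h.prime_radical_iff_image[OF this ker]
  show ?thesis
    unfolding almost_armendariz_iff_coeffs[OF h.R.ring_axioms] almost_armendariz_iff_coeffs[OF h.S.ring_axioms]
  proof (intro iffI ballI impI allI)
    fix f g i j
    assume AA: "\<forall>f\<in>carrier (UP A). \<forall>g\<in>carrier (UP A). f \<otimes>\<^bsub>UP A\<^esub> g = \<zero>\<^bsub>UP A\<^esub> \<longrightarrow>
        (\<forall>i j. f i \<otimes>\<^bsub>A\<^esub> g j \<in> prime_radical A)"
      and f: "f \<in> carrier (UP B)" and g: "g \<in> carrier (UP B)" and fg: "f \<otimes>\<^bsub>UP B\<^esub> g = \<zero>\<^bsub>UP B\<^esub>"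
    have fi: "f i \<in> carrier B" and gj: "g j \<in> carrier B"
      using f g by (simp_all add: UP_coeff_closed)
    have "s (f i) \<otimes>\<^bsub>A\<^esub> s (g j) \<in> prime_radical A"
      using AA[rule_format, OF ring_hom_poly_closed[OF s f] ring_hom_poly_closed[OF s g]
        ring_hom_poly_mult_eq_zero[OF s f g fg]] by (simp only: comp_apply)
    then have "h (s (f i) \<otimes>\<^bsub>A\<^esub> s (g j)) \<in> prime_radical B"
      using radical fi gj s.hom_closed h.R.m_closed by blast
    moreover have "h (s (f i) \<otimes>\<^bsub>A\<^esub> s (g j)) = f i \<otimes>\<^bsub>B\<^esub> g j"
      using fi gj by (simp only: h.hom_mult s.hom_closed retraction)
    ultimately show "f i \<otimes>\<^bsub>B\<^esub> g j \<in> prime_radical B" by (simp only:)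
  next
    fix f g i j
    assume AA: "\<forall>f\<in>carrier (UP B). \<forall>g\<in>carrier (UP B). f \<otimes>\<^bsub>UP B\<^esub> g = \<zero>\<^bsub>UP B\<^esub> \<longrightarrow>
        (\<forall>i j. f i \<otimes>\<^bsub>B\<^esub> g j \<in> prime_radical B)"
      and f: "f \<in> carrier (UP A)" and g: "g \<in> carrier (UP A)" and fg: "f \<otimes>\<^bsub>UP A\<^esub> g = \<zero>\<^bsub>UP A\<^esub>"
    have fi: "f i \<in> carrier A" and gj: "g j \<in> carrier A"
      using f g by (simp_all add: UP_coeff_closed)
    have "h (f i) \<otimes>\<^bsub>B\<^esub> h (g j) \<in> prime_radical B"
      using AA[rule_format, OF ring_hom_poly_closed[OF h f] ring_hom_poly_closed[OF h g]
        ring_hom_poly_mult_eq_zero[OF h f g fg]] by (simp only: comp_apply)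
    then show "f i \<otimes>\<^bsub>A\<^esub> g j \<in> prime_radical A"
      using radical fi gj h.R.m_closed by (simp only: h.hom_mult)
  qed
qed

locale truncated_poly_ring = UP_ring +
  fixes n :: nat
  assumes n_pos: "0 < n"
begin

abbreviation "I \<equiv> Idl\<^bsub>P\<^esub> {up_ring.monom P \<one> n}"
abbreviation "S \<equiv> P Quot I"

definition X_pow_multiples :: "nat \<Rightarrow> (nat \<Rightarrow> 'a) set" where
  "X_pow_multiples m = {p \<in> carrier P. \<forall>i<m. up_ring.coeff P p i = \<zero>}"

lemma X_pow_multiples_mult:
  assumes p: "p \<in> X_pow_multiples a" and q: "q \<in> X_pow_multiples b"
  shows "p \<otimes>\<^bsub>P\<^esub> q \<in> X_pow_multiples (a + b)"
proof -
  have pc: "p \<in> carrier P" and qc: "q \<in> carrier P"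
    and pz: "\<And>i. i < a \<Longrightarrow> up_ring.coeff P p i = \<zero>"
    and qz: "\<And>i. i < b \<Longrightarrow> up_ring.coeff P q i = \<zero>"
    using p q by (auto simp: X_pow_multiples_def)
  have "up_ring.coeff P (p \<otimes>\<^bsub>P\<^esub> q) k = \<zero>" if "k < a + b" for k
  proof -
    have "(\<Oplus>i \<in> {..k}. up_ring.coeff P p i \<otimes> up_ring.coeff P q (k - i)) = (\<Oplus>i \<in> {..k}. \<zero>)"
    proof (rule R.finsum_cong')
      fix i assume "i \<in> {..k}"
      then show "up_ring.coeff P p i \<otimes> up_ring.coeff P q (k - i) = \<zero>"
        using pz qz pc qc \<open>k < a + b\<close> by (cases "i < a") simp_all
    qed simp_all
    then show ?thesis using pc qc by simp
  qed
  then show ?thesis using pc qc by (simp add: X_pow_multiples_def)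
qed

lemma X_pow_multiples_0: "X_pow_multiples 0 = carrier P"
  by (auto simp: X_pow_multiples_def)

lemma X_pow_multiples_ideal: "ideal (X_pow_multiples m) P"
proof (rule idealI)
  show "ring P" ..
  show "subgroup (X_pow_multiples m) (add_monoid P)"
    by (rule P.add.subgroupI) (auto simp: X_pow_multiples_def)
next
  fix a x assume "a \<in> X_pow_multiples m" and "x \<in> carrier P"
  then show "x \<otimes>\<^bsub>P\<^esub> a \<in> X_pow_multiples m" and "a \<otimes>\<^bsub>P\<^esub> x \<in> X_pow_multiples m"
    using X_pow_multiples_mult[of x 0 a m] X_pow_multiples_mult[of a m x 0]
    by (simp_all add: X_pow_multiples_0)
qed

lemma monom_X_pow_multiples: "up_ring.monom P \<one> n \<in> X_pow_multiples n"
  by (simp add: X_pow_multiples_def)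

text \<open>Every polynomial whose coefficients below degree \<open>n\<close> vanish is \<open>X\<^sup>n\<close> times its shift.\<close>

lemma genideal_X_pow_eq: "I = X_pow_multiples n"
proof
  show "I \<subseteq> X_pow_multiples n"
    by (rule P.genideal_minimal[OF X_pow_multiples_ideal]) (simp add: monom_X_pow_multiples)
  show "X_pow_multiples n \<subseteq> I"
  proof
    fix p assume p: "p \<in> X_pow_multiples n"
    then have pc: "p \<in> carrier P" by (simp add: X_pow_multiples_def)
    define q where "q = (\<lambda>k. p (k + n))"
    have qc: "q \<in> carrier P"
    proof -
      obtain N where "bound \<zero> N p" using pc by (auto simp: P_def UP_def up_def)
      then have "bound \<zero> N q" by (auto simp: q_def bound_def)
      moreover have "q k \<in> carrier R" for k using UP_coeff_closed[OF pc[unfolded P_def]] by (simp add: q_def)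
      ultimately show ?thesis by (auto simp: P_def UP_def)
    qed
    have "p = up_ring.monom P \<one> n \<otimes>\<^bsub>P\<^esub> q"
    proof (rule up_eqI)
      fix k
      show "up_ring.coeff P p k = up_ring.coeff P (up_ring.monom P \<one> n \<otimes>\<^bsub>P\<^esub> q) k"
      proof (cases "k < n")
        case True
        have "up_ring.monom P \<one> n \<otimes>\<^bsub>P\<^esub> q \<in> X_pow_multiples (n + 0)"
          using X_pow_multiples_mult[OF monom_X_pow_multiples, of q 0] qc by (simp add: X_pow_multiples_0)
        then show ?thesis using p True by (simp add: X_pow_multiples_def)
      next
        case False
        have "up_ring.coeff P (up_ring.monom P \<one> n \<otimes>\<^bsub>P\<^esub> q) ((k - n) + n)
            = \<one> \<otimes> up_ring.coeff P q (k - n)"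
          by (rule coeff_monom_mult) (simp_all add: qc)
        then have "up_ring.coeff P (up_ring.monom P \<one> n \<otimes>\<^bsub>P\<^esub> q) k = up_ring.coeff P q (k - n)"
          using False qc by simp
        also have "\<dots> = up_ring.coeff P p k"
          using pc qc False by (simp add: P_def coeff_UP_eq q_def)
        finally show ?thesis by simp
      qed
    qed (use pc qc in simp_all)
    moreover have "up_ring.monom P \<one> n \<in> I" by (rule P.genideal_self') simp
    ultimately show "p \<in> I" using ideal.I_r_closed[OF P.genideal_ideal _ qc] by simp
  qed
qed

lemma ideal_I: "ideal I P"
  by (rule P.genideal_ideal) simp

lemma ring_S: "ring S"
  by (rule ideal.quotient_is_ring[OF ideal_I])

lemma rcos_ring_hom: "(+>\<^bsub>P\<^esub>) I \<in> ring_hom P S"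
  by (rule ideal.rcos_ring_hom[OF ideal_I])

lemma carrier_S_cases:
  assumes "x \<in> carrier S"
  obtains p where "p \<in> carrier P" and "x = I +>\<^bsub>P\<^esub> p"
  using assms by (auto simp: FactRing_def A_RCOSETS_def')

lemma rcos_mult: "p \<in> carrier P \<Longrightarrow> q \<in> carrier P \<Longrightarrow>
    (I +>\<^bsub>P\<^esub> p) \<otimes>\<^bsub>S\<^esub> (I +>\<^bsub>P\<^esub> q) = I +>\<^bsub>P\<^esub> (p \<otimes>\<^bsub>P\<^esub> q)"
  by (rule ring_hom_mult[OF rcos_ring_hom, symmetric])

lemma rcos_add: "p \<in> carrier P \<Longrightarrow> q \<in> carrier P \<Longrightarrow>
    (I +>\<^bsub>P\<^esub> p) \<oplus>\<^bsub>S\<^esub> (I +>\<^bsub>P\<^esub> q) = I +>\<^bsub>P\<^esub> (p \<oplus>\<^bsub>P\<^esub> q)"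
  by (rule ring_hom_add[OF rcos_ring_hom, symmetric])

text \<open>Read off an arbitrary representative: all of them agree at \<open>0\<close>, since \<open>I\<close> consists of
  multiples of \<open>X\<close>.\<close>

definition const_coeff :: "(nat \<Rightarrow> 'a) set \<Rightarrow> 'a" where
  "const_coeff C = up_ring.coeff P (SOME p. p \<in> C) 0"

definition const_embed :: "'a \<Rightarrow> (nat \<Rightarrow> 'a) set" where
  "const_embed a = I +>\<^bsub>P\<^esub> up_ring.monom P a 0"

lemma const_coeff_rcos:
  assumes p: "p \<in> carrier P"
  shows "const_coeff (I +>\<^bsub>P\<^esub> p) = up_ring.coeff P p 0"
proof -
  interpret I: ideal I P by (rule ideal_I)
  have "(SOME x. x \<in> I +>\<^bsub>P\<^esub> p) \<in> I +>\<^bsub>P\<^esub> p"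
    using I.a_rcos_self[OF p] by (rule someI[where P = "\<lambda>x. x \<in> I +>\<^bsub>P\<^esub> p"])
  then obtain i where i: "i \<in> I" and some_eq: "(SOME x. x \<in> I +>\<^bsub>P\<^esub> p) = i \<oplus>\<^bsub>P\<^esub> p"
    unfolding a_r_coset_def' by blast
  have "i \<in> carrier P" using i by (rule I.Icarr)
  moreover have "up_ring.coeff P i 0 = \<zero>"
    using i n_pos unfolding genideal_X_pow_eq X_pow_multiples_def by blast
  ultimately show ?thesis
    using p by (simp add: const_coeff_def some_eq)
qed

lemma const_coeff_hom: "ring_hom_ring S R const_coeff"
proof (rule ring_hom_ringI[OF ring_S R.ring_axioms])
  fix x assume "x \<in> carrier S"
  then obtain p where "p \<in> carrier P" "x = I +>\<^bsub>P\<^esub> p" by (rule carrier_S_cases)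
  then show "const_coeff x \<in> carrier R" by (simp add: const_coeff_rcos)
next
  fix x y assume x: "x \<in> carrier S" and y: "y \<in> carrier S"
  obtain p where p: "p \<in> carrier P" "x = I +>\<^bsub>P\<^esub> p" using x by (rule carrier_S_cases)
  obtain q where q: "q \<in> carrier P" "y = I +>\<^bsub>P\<^esub> q" using y by (rule carrier_S_cases)
  have "up_ring.coeff P (p \<otimes>\<^bsub>P\<^esub> q) 0 = up_ring.coeff P p 0 \<otimes> up_ring.coeff P q 0"
    using p q by simp
  then show "const_coeff (x \<otimes>\<^bsub>S\<^esub> y) = const_coeff x \<otimes> const_coeff y"
    using p q by (simp add: rcos_mult const_coeff_rcos)
  show "const_coeff (x \<oplus>\<^bsub>S\<^esub> y) = const_coeff x \<oplus> const_coeff y"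
    using p q by (simp add: rcos_add const_coeff_rcos)
next
  have "\<one>\<^bsub>S\<^esub> = I +>\<^bsub>P\<^esub> \<one>\<^bsub>P\<^esub>"
    unfolding FactRing_def by (simp only: monoid.select_convs)
  then show "const_coeff \<one>\<^bsub>S\<^esub> = \<one>"
    by (simp add: const_coeff_rcos)
qed

lemma const_embed_hom: "ring_hom_ring R S const_embed"
proof (rule ring_hom_ringI2[OF R.ring_axioms ring_S])
  have "(+>\<^bsub>P\<^esub>) I \<circ> (\<lambda>a. up_ring.monom P a 0) \<in> ring_hom R S"
    by (rule ring_hom_trans[OF const_ring_hom rcos_ring_hom])
  then show "const_embed \<in> ring_hom R S"
    by (simp add: comp_def const_embed_def[abs_def])
qed

lemma const_coeff_const_embed: "a \<in> carrier R \<Longrightarrow> const_coeff (const_embed a) = a"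
  by (simp add: const_embed_def const_coeff_rcos)

lemma const_coeff_kernel_subset_nc_prime_ideal:
  assumes Q: "nc_prime_ideal S Q" and x: "x \<in> carrier S" and "const_coeff x = \<zero>"
  shows "x \<in> Q"
proof -
  interpret I: ideal I P by (rule ideal_I)
  define K where "K m = (+>\<^bsub>P\<^esub>) I ` X_pow_multiples m" for m
  have "K 1 \<subseteq> Q"
  proof (rule filtration_subset_nc_prime_ideal[OF Q])
    show "ideal (K m) S" for m
      unfolding K_def by (rule P.ring_ideal_imp_quot_ideal[OF ideal_I X_pow_multiples_ideal])
    show "x \<otimes>\<^bsub>S\<^esub> y \<in> K (Suc m)" if "x \<in> K m" "y \<in> K 1" for m x y
      using that X_pow_multiples_mult[of _ m _ 1] rcos_mult
        X_pow_multiples_ideal[THEN ideal.Icarr] by (auto simp: K_def)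
    have "K n \<subseteq> {\<zero>\<^bsub>S\<^esub>}"
      by (auto simp: K_def genideal_X_pow_eq[symmetric] I.a_rcos_const FactRing_def)
    moreover have "\<zero>\<^bsub>S\<^esub> \<in> Q"
      using Q additive_subgroup.zero_closed ideal.axioms(1) by (auto simp: nc_prime_ideal_def)
    ultimately have "K n \<subseteq> Q" by blast
    then show "K (Suc (n - 1)) \<subseteq> Q"
      using n_pos by simp
  qed
  moreover obtain p where "p \<in> carrier P" "x = I +>\<^bsub>P\<^esub> p"
    using x by (rule carrier_S_cases)
  ultimately show ?thesis
    using \<open>const_coeff x = \<zero>\<close> by (auto simp: K_def X_pow_multiples_def const_coeff_rcos)
qed

end

theorem theorem2p1:
  fixes R :: "('a, 'b) ring_scheme" and n :: nat
  assumes "ring R" and "n \<ge> 2"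
  shows "almost_armendariz R \<longleftrightarrow> almost_armendariz (trunc_poly_ring R n)"
proof -
  interpret truncated_poly_ring R "UP R" n
    using assms by (auto intro!: truncated_poly_ring.intro UP_ring.intro truncated_poly_ring_axioms.intro)
  have "almost_armendariz (trunc_poly_ring R n) \<longleftrightarrow> almost_armendariz R"
    unfolding trunc_poly_ring_def
    by (rule almost_armendariz_retract[OF const_coeff_hom const_embed_hom const_coeff_const_embed
          const_coeff_kernel_subset_nc_prime_ideal])
  then show ?thesis by (rule sym)
qed

end
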